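(* Let $n\ge1$, $d>0$, $\eta>0$, $A(d)=\{a\in\mathbb{R}^n:|a|\le d\}$ and $t:A(d)\times[-\eta,\eta]\to\mathbb{R}$ twice continuously differentiable. Assume $\partial_{bb}t(a,b)>0$ for all $a\in A(d),b\in[-\eta,\eta]$; $\partial_bt(a,\eta)>0$ and $\partial_bt(a,-\eta)<0$ for all $a\in A(d)$; $$\lambda_{\max}\left(\nabla_a^2t(a,b)-\frac{1}{\partial_{bb}t(a,b)}\partial_b\nabla_at(a,b)\big(\partial_b\nabla_at(a,b)\big)^T\right)<0$$ for all $a\in A(d),b\in[-\eta,\eta]$; and that the directional derivative $\partial_a\{\inf_{b\in[-\eta,\eta]}t(a,b)\}$ in the direction of the vector $a$ exists and is negative for all $a$ with $|a|=d$. Then $t$ has a unique critical point in $A(d)\times[-\eta,\eta]$, and $\sup_{a\in A(d)}\inf_{b\in[-\eta,\eta]}t(a,b)$ is uniquely achieved at this critical point.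
   Context: $\lambda_{\max}$ denotes the largest eigenvalue of a symmetric matrix. *)

theory Defs
  imports "HOL-Analysis.Analysis"
begin

definition lambda_max :: "real^'n^'n \<Rightarrow> real" where
  "lambda_max M = Max {l. \<exists>v. v \<noteq> 0 \<and> M *v v = l *\<^sub>R v}"

definition outer :: "real^'n \<Rightarrow> real^'n^'n" where
  "outer v = (\<chi> i j. v $ i * v $ j)"

end

theory Submission
  imports Defs
begin

text \<open>For fixed \<open>a\<close>, \<open>t(a, -)\<close> is strictly convex on \<open>[-\<eta>, \<eta>]\<close> and its derivative changes sign,
  so it has a unique minimizer \<open>\<beta>(a)\<close>, the zero of \<open>\<partial>\<^sub>bt(a, -)\<close>, and the lower envelope is
  \<open>\<phi>(a) = t(a, \<beta>(a))\<close>. Implicit differentiation makes \<open>\<beta>\<close> differentiable in the interior, and by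
  the envelope theorem the derivative of \<open>\<phi>\<close> in direction \<open>h\<close> is \<open>\<nabla>\<^sub>at(a, \<beta>(a)) \<bullet> h\<close>. Its derivative
  in turn is the quadratic form of the Schur complement in the hypothesis (this needs symmetry of
  the Hessian of \<open>t\<close>), hence negative: along every segment leaving a critical point of \<open>\<phi>\<close>,
  \<open>\<phi>\<close> strictly decreases. So \<open>\<phi>\<close> has at most one interior critical point, which is then its strict
  maximizer. The boundary hypothesis excludes maximizers and critical points on \<open>|a| = d\<close>, compactness
  yields a maximizer, and the critical points of \<open>t\<close> are exactly the pairs \<open>(a, \<beta>(a))\<close> with \<open>a\<close>
  critical for \<open>\<phi>\<close>.\<close>

section \<open>Mean values and symmetry of second derivatives\<close>

lemma convex_segment_mem:
  assumes "convex S" "p \<in> S" "q \<in> S" "s \<in> {0..1}"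
  shows "p + s *\<^sub>R (q - p) \<in> S"
proof -
  have "p + s *\<^sub>R (q - p) = (1 - s) *\<^sub>R p + s *\<^sub>R q" by (simp add: algebra_simps)
  then show ?thesis using convexD_alt[OF assms(1-3), of s] assms(4) by simp
qed

lemma mvt_convex:
  fixes f :: "'a::real_normed_vector \<Rightarrow> real"
  assumes S: "convex S" "p \<in> S" "q \<in> S"
    and f: "\<And>x. x \<in> S \<Longrightarrow> (f has_derivative f' x) (at x within S)"
  shows "\<exists>s\<in>{0<..<1}. f q - f p = f' (p + s *\<^sub>R (q - p)) (q - p)"
proof -
  have "((\<lambda>s. f (p + s *\<^sub>R (q - p))) has_derivative (\<lambda>y. f' (p + s *\<^sub>R (q - p)) (y *\<^sub>R (q - p))))
      (at s within {0..1})" if "s \<in> {0..1}" for s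
  proof (rule has_derivative_in_compose2[OF f _ that, where f = "\<lambda>s. p + s *\<^sub>R (q - p)"])
    show "(\<lambda>s. p + s *\<^sub>R (q - p)) ` {0..1} \<subseteq> S" using convex_segment_mem[OF S] by auto
  qed (auto intro!: derivative_eq_intros)
  then obtain s where "s \<in> {0<..<1}"
    and "f (p + 1 *\<^sub>R (q - p)) - f (p + 0 *\<^sub>R (q - p)) = f' (p + s *\<^sub>R (q - p)) ((1 - 0) *\<^sub>R (q - p))"
    using mvt_simple[of 0 1 "\<lambda>s. f (p + s *\<^sub>R (q - p))" "\<lambda>s y. f' (p + s *\<^sub>R (q - p)) (y *\<^sub>R (q - p))"]
    by auto
  then show ?thesis by auto
qed

lemma mvt_convex_snd:
  fixes f :: "('a::real_inner) \<times> real \<Rightarrow> real"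
  assumes "convex S" "(a, b) \<in> S" "(a, b') \<in> S"
    and "\<And>p. p \<in> S \<Longrightarrow> (f has_derivative (\<lambda>(h, k). F p \<bullet> h + G p * k)) (at p within S)"
  shows "\<exists>s\<in>{0<..<1}. f (a, b') - f (a, b) = G (a, b + s * (b' - b)) * (b' - b)"
  using mvt_convex[OF assms] by simp

lemma has_real_derivative_along_line:
  fixes f :: "'a::real_normed_vector \<Rightarrow> real"
  assumes "(f has_derivative f') (at (x + u *\<^sub>R v))"
  shows "((\<lambda>u. f (x + u *\<^sub>R v)) has_real_derivative f' v) (at u)"
proof -
  have "((\<lambda>u. x + u *\<^sub>R v) has_derivative (\<lambda>y. y *\<^sub>R v)) (at u)"
    by (auto intro!: derivative_eq_intros)
  from diff_chain_at[OF this assms]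
  have "((\<lambda>u. f (x + u *\<^sub>R v)) has_derivative (\<lambda>y. f' (y *\<^sub>R v))) (at u)"
    by (simp add: o_def)
  moreover have "f' (y *\<^sub>R v) = f' v * y" for y
    using linear_scale[OF has_derivative_linear[OF assms]] by (simp add: mult.commute)
  ultimately show ?thesis by (simp add: has_field_derivative_def)
qed

lemma norm_scaleR_add_le:
  fixes v w :: "'a::real_normed_vector"
  assumes "a \<in> {0..s}" "b \<in> {0..s}"
  shows "norm (a *\<^sub>R v + b *\<^sub>R w) \<le> s * (norm v + norm w)"
proof -
  have "norm (a *\<^sub>R v + b *\<^sub>R w) \<le> a * norm v + b * norm w"
    using assms norm_triangle_ineq[of "a *\<^sub>R v" "b *\<^sub>R w"] by auto
  also have "\<dots> \<le> s * norm v + s * norm w"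
    using assms by (intro add_mono mult_right_mono) auto
  finally show ?thesis by (simp add: distrib_left)
qed

lemma second_difference_mvt:
  fixes f :: "'a::real_normed_vector \<Rightarrow> real"
  assumes f': "\<And>y. y \<in> ball x r \<Longrightarrow> (f has_derivative f' y) (at y)"
    and f'': "\<And>y v. y \<in> ball x r \<Longrightarrow> ((\<lambda>z. f' z v) has_derivative f'' y v) (at y)"
    and s: "0 < s" "s * (norm v + norm w) < r"
  shows "\<exists>\<tau>\<in>{0..s}. \<exists>\<sigma>\<in>{0..s}.
     f (x + (s *\<^sub>R v + s *\<^sub>R w)) - f (x + s *\<^sub>R v) - f (x + s *\<^sub>R w) + f x
       = s * s * f'' (x + (\<tau> *\<^sub>R v + \<sigma> *\<^sub>R w)) v w"
proof -
  have inb: "x + (a *\<^sub>R v + b *\<^sub>R w) \<in> ball x r" if "a \<in> {0..s}" "b \<in> {0..s}" for a b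
  proof -
    have "dist x (x + (a *\<^sub>R v + b *\<^sub>R w)) = norm (a *\<^sub>R v + b *\<^sub>R w)"
      by (metis add_diff_cancel_left' dist_commute dist_norm)
    then show ?thesis using norm_scaleR_add_le[OF that, of v w] s by simp
  qed
  define g where "g \<tau> = f (x + s *\<^sub>R w + \<tau> *\<^sub>R v) - f (x + \<tau> *\<^sub>R v)" for \<tau>
  have g': "DERIV g \<tau> :> f' (x + s *\<^sub>R w + \<tau> *\<^sub>R v) v - f' (x + \<tau> *\<^sub>R v) v"
    if "0 \<le> \<tau>" "\<tau> \<le> s" for \<tau>
    unfolding g_def
    by (intro DERIV_diff has_real_derivative_along_line f')
      (use inb[of \<tau> s] inb[of \<tau> 0] that s in \<open>simp_all add: algebra_simps\<close>)
  obtain \<tau> where \<tau>: "0 < \<tau>" "\<tau> < s"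
    and g: "g s - g 0 = (s - 0) * (f' (x + s *\<^sub>R w + \<tau> *\<^sub>R v) v - f' (x + \<tau> *\<^sub>R v) v)"
    using MVT2[OF s(1), of g "\<lambda>\<tau>. f' (x + s *\<^sub>R w + \<tau> *\<^sub>R v) v - f' (x + \<tau> *\<^sub>R v) v"] g'
    by auto
  define h where "h \<sigma> = f' (x + \<tau> *\<^sub>R v + \<sigma> *\<^sub>R w) v" for \<sigma>
  have h': "DERIV h \<sigma> :> f'' (x + \<tau> *\<^sub>R v + \<sigma> *\<^sub>R w) v w" if "0 \<le> \<sigma>" "\<sigma> \<le> s" for \<sigma>
    unfolding h_def
  proof (rule has_real_derivative_along_line; rule f'')
    show "x + \<tau> *\<^sub>R v + \<sigma> *\<^sub>R w \<in> ball x r"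
      using inb[of \<tau> \<sigma>] that \<tau> by (simp add: algebra_simps)
  qed
  obtain \<sigma> where \<sigma>: "0 < \<sigma>" "\<sigma> < s" and h: "h s - h 0 = (s - 0) * f'' (x + \<tau> *\<^sub>R v + \<sigma> *\<^sub>R w) v w"
    using MVT2[OF s(1), of h "\<lambda>\<sigma>. f'' (x + \<tau> *\<^sub>R v + \<sigma> *\<^sub>R w) v w"] h' by auto
  have "f (x + (s *\<^sub>R v + s *\<^sub>R w)) - f (x + s *\<^sub>R v) - f (x + s *\<^sub>R w) + f x = g s - g 0"
    by (simp add: g_def algebra_simps)
  also have "\<dots> = s * s * f'' (x + (\<tau> *\<^sub>R v + \<sigma> *\<^sub>R w)) v w"
    using g h by (simp add: h_def algebra_simps)
  finally show ?thesis using \<tau> \<sigma> by (meson atLeastAtMost_iff less_imp_le)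
qed

lemma tendsto_dist_le:
  assumes "(f \<longlongrightarrow> l) F" and "eventually (\<lambda>x. dist (g x) l \<le> dist (f x) l) F"
  shows "(g \<longlongrightarrow> l) F"
proof -
  have "((\<lambda>x. dist (f x) l) \<longlongrightarrow> 0) F" using assms(1) by (rule tendsto_dist_iff[THEN iffD1])
  then have "((\<lambda>x. dist (g x) l) \<longlongrightarrow> 0) F"
    by (rule tendsto_sandwich[OF _ assms(2) tendsto_const, rotated]) simp
  then show ?thesis by (rule tendsto_dist_iff[THEN iffD2])
qed

lemma isCont_eq_if_arbitrarily_close:
  fixes g h :: "'a::metric_space \<Rightarrow> 'b::metric_space"
  assumes "isCont g x" "isCont h x"
    and close: "\<And>e. e > 0 \<Longrightarrow> \<exists>y z. dist y x < e \<and> dist z x < e \<and> g y = h z"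
  shows "g x = h x"
proof (rule ccontr)
  assume "g x \<noteq> h x"
  then have e: "dist (g x) (h x) / 2 > 0" by simp
  obtain dg where "dg > 0" and dg: "\<And>y. dist y x < dg \<Longrightarrow> dist (g y) (g x) < dist (g x) (h x) / 2"
    using assms(1) e unfolding continuous_at_eps_delta by blast
  obtain dh where "dh > 0" and dh: "\<And>y. dist y x < dh \<Longrightarrow> dist (h y) (h x) < dist (g x) (h x) / 2"
    using assms(2) e unfolding continuous_at_eps_delta by blast
  obtain y z where "dist y x < dg" "dist z x < dh" and yz: "g y = h z"
    using close[of "min dg dh"] \<open>dg > 0\<close> \<open>dh > 0\<close> by auto
  then have "dist (g y) (g x) + dist (h z) (h x) < dist (g x) (h x)"
    using dg dh by fastforce
  moreover have "dist (g x) (h x) \<le> dist (g y) (g x) + dist (h z) (h x)"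
    using dist_triangle3[of "g x" "h x" "g y"] yz by simp
  ultimately show False by simp
qed

lemma second_derivative_symmetric:
  fixes f :: "'a::real_normed_vector \<Rightarrow> real"
  assumes U: "open U" "x \<in> U"
    and f': "\<And>y. y \<in> U \<Longrightarrow> (f has_derivative f' y) (at y)"
    and f'': "\<And>y v. y \<in> U \<Longrightarrow> ((\<lambda>z. f' z v) has_derivative f'' y v) (at y)"
    and cont: "\<And>v w. isCont (\<lambda>y. f'' y v w) x"
  shows "f'' x v w = f'' x w v"
proof (rule isCont_eq_if_arbitrarily_close[OF cont cont])
  fix e :: real assume "e > 0"
  obtain r where "r > 0" and r: "ball x r \<subseteq> U" using U openE by blast
  define s where "s = min r e / (norm v + norm w + 1)"
  have C: "norm v + norm w + 1 > 0" by (simp add: add_nonneg_pos)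
  have "s > 0" using \<open>r > 0\<close> \<open>e > 0\<close> C by (simp add: s_def)
  have s_less: "s * (norm v + norm w) < min r e"
  proof -
    have "s * (norm v + norm w) < s * (norm v + norm w + 1)" using \<open>s > 0\<close> by simp
    also have "\<dots> = min r e" unfolding s_def using C by simp
    finally show ?thesis .
  qed
  have vw: "s * (norm v + norm w) < r" and wv: "s * (norm w + norm v) < r"
    using s_less by (simp_all add: add.commute)
  have ball_f': "\<And>y. y \<in> ball x r \<Longrightarrow> (f has_derivative f' y) (at y)"
    and ball_f'': "\<And>y v. y \<in> ball x r \<Longrightarrow> ((\<lambda>z. f' z v) has_derivative f'' y v) (at y)"
    using f' f'' r by auto
  obtain \<tau> \<sigma> where \<tau>\<sigma>: "\<tau> \<in> {0..s}" "\<sigma> \<in> {0..s}"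
    and vw_eq: "f (x + (s *\<^sub>R v + s *\<^sub>R w)) - f (x + s *\<^sub>R v) - f (x + s *\<^sub>R w) + f x
       = s * s * f'' (x + (\<tau> *\<^sub>R v + \<sigma> *\<^sub>R w)) v w"
    using second_difference_mvt[OF ball_f' ball_f'' \<open>s > 0\<close> vw] by blast
  obtain \<tau>' \<sigma>' where \<tau>\<sigma>': "\<tau>' \<in> {0..s}" "\<sigma>' \<in> {0..s}"
    and wv_eq: "f (x + (s *\<^sub>R w + s *\<^sub>R v)) - f (x + s *\<^sub>R w) - f (x + s *\<^sub>R v) + f x
       = s * s * f'' (x + (\<tau>' *\<^sub>R w + \<sigma>' *\<^sub>R v)) w v"
    using second_difference_mvt[OF ball_f' ball_f'' \<open>s > 0\<close> wv] by blast
  have "s * s * f'' (x + (\<tau> *\<^sub>R v + \<sigma> *\<^sub>R w)) v w = s * s * f'' (x + (\<tau>' *\<^sub>R w + \<sigma>' *\<^sub>R v)) w v"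
    using vw_eq wv_eq by (simp add: algebra_simps)
  then have "f'' (x + (\<tau> *\<^sub>R v + \<sigma> *\<^sub>R w)) v w = f'' (x + (\<tau>' *\<^sub>R w + \<sigma>' *\<^sub>R v)) w v"
    using \<open>s > 0\<close> by simp
  moreover have "dist (x + (\<tau> *\<^sub>R v + \<sigma> *\<^sub>R w)) x < e" "dist (x + (\<tau>' *\<^sub>R w + \<sigma>' *\<^sub>R v)) x < e"
    using norm_scaleR_add_le[OF \<tau>\<sigma>(1,2), of v w] norm_scaleR_add_le[OF \<tau>\<sigma>', of w v] s_less
    by (simp_all add: dist_norm add.commute)
  ultimately show "\<exists>y z. dist y x < e \<and> dist z x < e \<and> f'' y v w = f'' z w v" by blast
qed

lemma has_real_derivative_at_left_le:
  fixes f g :: "real \<Rightarrow> real"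
  assumes f: "(f has_real_derivative D) (at 0 within {-1..0})"
    and g: "(g has_real_derivative E) (at 0 within {-1..0})"
    and le: "\<And>u. u \<in> {-1..0} \<Longrightarrow> f u - f 0 \<le> g u - g 0"
  shows "E \<le> D"
proof -
  have at: "at (0::real) within {-1..0} = at_left 0" by (rule at_within_Icc_at_left) simp
  show ?thesis
  proof (rule tendsto_le[of "at_left 0" "\<lambda>y. (f y - f 0) / (y - 0)" D "\<lambda>y. (g y - g 0) / (y - 0)"])
    show "((\<lambda>y. (f y - f 0) / (y - 0)) \<longlongrightarrow> D) (at_left 0)"
      "((\<lambda>y. (g y - g 0) / (y - 0)) \<longlongrightarrow> E) (at_left 0)"
      using f g by (simp_all add: has_field_derivative_iff at)
    have "eventually (\<lambda>u. u \<in> {-1<..<0}) (at_left (0::real))"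
      by (rule eventually_at_left_real) simp
    then show "\<forall>\<^sub>F u in at_left 0. (g u - g 0) / (u - 0) \<le> (f u - f 0) / (u - 0)"
      by eventually_elim (use le in \<open>auto intro: divide_right_mono_neg\<close>)
  qed simp
qed

lemma radial_segment_in_cball:
  fixes a :: "'a::real_normed_vector"
  assumes "a \<in> cball 0 r" "u \<in> {-1..0}"
  shows "a + u *\<^sub>R a \<in> cball 0 r"
proof -
  have "a + u *\<^sub>R a = (1 + u) *\<^sub>R a" by (simp add: algebra_simps)
  then have "norm (a + u *\<^sub>R a) = (1 + u) * norm a" using assms(2) by simp
  also have "\<dots> \<le> norm a" using assms(2) mult_right_mono[of "1 + u" 1 "norm a"] by simp
  finally show ?thesis using assms(1) by simp
qed

section \<open>The Rayleigh bound for symmetric matrices\<close>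

lemma outer_mult_vector: "outer u *v y = (u \<bullet> y) *\<^sub>R u"
  by (simp add: outer_def vec_eq_iff matrix_vector_mult_def inner_vec_def sum_distrib_left mult_ac)

lemma nonneg_quadratic_linear_coeff_zero:
  fixes c e :: real
  assumes "\<And>s. 0 \<le> 2 * s * c + s * s * e"
  shows "c = 0"
proof -
  define E where "E = \<bar>e\<bar> + 1"
  have E: "E > 0" unfolding E_def by simp
  have "0 \<le> (2 * (- c / E) * c + (- c / E) * (- c / E) * e) * (E * E)"
    using assms[of "- c / E"] E by simp
  also have "\<dots> = c * c * (e - 2 * E)" using E by (simp add: field_simps)
  finally have "0 \<le> c * c * (e - 2 * E)" .
  moreover have "e - 2 * E < 0" unfolding E_def by (cases "e \<ge> 0") auto
  ultimately have "c * c \<le> 0" by (simp add: zero_le_mult_iff)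
  then show ?thesis using mult_le_0_iff[of c c] by auto
qed

lemma quadratic_form_max_eigenvector:
  fixes M :: "real^'n^'n"
  assumes sym: "\<And>x y. x \<bullet> (M *v y) = y \<bullet> (M *v x)"
    and bound: "\<And>z. z \<bullet> (M *v z) \<le> \<mu> * (z \<bullet> z)"
    and attained: "v \<bullet> (M *v v) = \<mu> * (v \<bullet> v)"
  shows "M *v v = \<mu> *\<^sub>R v"
proof -
  define w where "w = M *v v - \<mu> *\<^sub>R v"
  have Mv: "M *v v = w + \<mu> *\<^sub>R v" by (simp add: w_def)
  define e where "e = \<mu> * (w \<bullet> w) - w \<bullet> (M *v w)"
  have "0 \<le> 2 * s * (- (w \<bullet> w)) + s * s * e" for s
  proof -
    have "(v + s *\<^sub>R w) \<bullet> (M *v (v + s *\<^sub>R w))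
        = v \<bullet> (M *v v) + 2 * s * (w \<bullet> (M *v v)) + s * s * (w \<bullet> (M *v w))"
      using sym[of v w] by (simp add: matrix_vector_right_distrib matrix_vector_mult_scaleR
          inner_add_left inner_add_right algebra_simps)
    moreover have "(v + s *\<^sub>R w) \<bullet> (v + s *\<^sub>R w) = v \<bullet> v + 2 * s * (v \<bullet> w) + s * s * (w \<bullet> w)"
      by (simp add: inner_add_left inner_add_right inner_commute algebra_simps)
    moreover have "w \<bullet> (M *v v) = w \<bullet> w + \<mu> * (v \<bullet> w)"
      unfolding Mv by (simp add: inner_add_right inner_commute)
    ultimately show ?thesis
      using bound[of "v + s *\<^sub>R w"] attained inner_commute[of w v] by (simp add: e_def algebra_simps)
  qed
  then have "- (w \<bullet> w) = 0" by (rule nonneg_quadratic_linear_coeff_zero)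
  then show ?thesis by (simp add: w_def)
qed

lemma symmetric_matrix_top_eigenvector:
  fixes M :: "real^'n^'n"
  assumes sym: "\<And>x y. x \<bullet> (M *v y) = y \<bullet> (M *v x)"
  obtains v \<mu> where "v \<noteq> 0" "M *v v = \<mu> *\<^sub>R v" "\<And>z. z \<bullet> (M *v z) \<le> \<mu> * (z \<bullet> z)"
proof -
  define q where "q z = z \<bullet> (M *v z)" for z
  have "sphere (0::real^'n) 1 \<noteq> {}"
    using norm_axis_1 by (metis dist_0_norm empty_iff mem_sphere)
  moreover have "continuous_on (sphere 0 1) q" unfolding q_def by (intro continuous_intros)
  ultimately obtain v where v: "v \<in> sphere 0 1" and vmax: "\<And>z. z \<in> sphere 0 1 \<Longrightarrow> q z \<le> q v"
    using continuous_attains_sup[OF compact_sphere] by blast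
  have bound: "q z \<le> q v * (z \<bullet> z)" for z
  proof (cases "z = 0")
    case False
    define u where "u = (1 / norm z) *\<^sub>R z"
    have "q z = norm z * norm z * q u"
      using False by (simp add: q_def u_def matrix_vector_mult_scaleR)
    also have "\<dots> \<le> norm z * norm z * q v"
      using vmax[of u] False by (simp add: u_def mult_left_mono)
    finally show ?thesis by (simp add: power2_norm_eq_inner[symmetric] power2_eq_square mult_ac)
  qed (simp add: q_def)
  have "v \<bullet> v = 1" using v by (simp add: norm_eq_1)
  have eig: "M *v v = q v *\<^sub>R v"
  proof (rule quadratic_form_max_eigenvector[OF sym])
    show "z \<bullet> (M *v z) \<le> q v * (z \<bullet> z)" for z using bound[of z] unfolding q_def .
    show "v \<bullet> (M *v v) = q v * (v \<bullet> v)" using \<open>v \<bullet> v = 1\<close> by (simp add: q_def)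
  qed
  have "v \<noteq> 0" using v by auto
  then show ?thesis by (rule that[OF _ eig]) (use bound in \<open>simp add: q_def\<close>)
qed

lemma finite_eigenvalues_symmetric:
  fixes M :: "real^'n^'n"
  assumes sym: "\<And>x y. x \<bullet> (M *v y) = y \<bullet> (M *v x)"
  shows "finite {l. \<exists>v. v \<noteq> 0 \<and> M *v v = l *\<^sub>R v}"
proof -
  define E where "E = {l. \<exists>v. v \<noteq> 0 \<and> M *v v = l *\<^sub>R v}"
  obtain ev where ev: "\<And>l. l \<in> E \<Longrightarrow> ev l \<noteq> 0 \<and> M *v ev l = l *\<^sub>R ev l"
    using bchoice[of E "\<lambda>l v. v \<noteq> 0 \<and> M *v v = l *\<^sub>R v"] unfolding E_def by blast
  have inj: "inj_on ev E"
  proof (rule inj_onI)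
    fix l1 l2 assume "l1 \<in> E" "l2 \<in> E" "ev l1 = ev l2"
    then have "l1 *\<^sub>R ev l1 = l2 *\<^sub>R ev l1" using ev by metis
    then show "l1 = l2" using ev[OF \<open>l1 \<in> E\<close>] by simp
  qed
  have "pairwise orthogonal (ev ` E)"
  proof (rule pairwiseI, clarsimp)
    fix l1 l2 assume l: "l1 \<in> E" "l2 \<in> E" "ev l1 \<noteq> ev l2"
    have "l1 * (ev l2 \<bullet> ev l1) = l2 * (ev l1 \<bullet> ev l2)"
      using ev[OF l(1)] ev[OF l(2)] sym[of "ev l2" "ev l1"] by simp
    moreover have "l1 \<noteq> l2" using l by auto
    ultimately show "orthogonal (ev l1) (ev l2)" by (simp add: orthogonal_def inner_commute)
  qed
  moreover have "0 \<notin> ev ` E" using ev by auto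
  ultimately have "finite (ev ` E)"
    using pairwise_orthogonal_independent independent_imp_finite by blast
  then show ?thesis using finite_imageD[OF _ inj] unfolding E_def by blast
qed

lemma quadratic_form_le_lambda_max:
  fixes M :: "real^'n^'n"
  assumes sym: "\<And>x y. x \<bullet> (M *v y) = y \<bullet> (M *v x)"
  shows "x \<bullet> (M *v x) \<le> lambda_max M * (x \<bullet> x)"
proof -
  obtain v \<mu> where "v \<noteq> 0" "M *v v = \<mu> *\<^sub>R v" and bound: "\<And>z. z \<bullet> (M *v z) \<le> \<mu> * (z \<bullet> z)"
    using symmetric_matrix_top_eigenvector[OF sym] by blast
  then have "\<mu> \<le> lambda_max M"
    unfolding lambda_max_def using finite_eigenvalues_symmetric[OF sym] by (auto intro!: Max_ge)
  then have "\<mu> * (x \<bullet> x) \<le> lambda_max M * (x \<bullet> x)" by (simp add: mult_right_mono)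
  then show ?thesis using bound[of x] by linarith
qed

section \<open>The minimax problem\<close>

locale minimax_problem =
  fixes t :: "(real^'n::finite) \<times> real \<Rightarrow> real"
    and ta :: "(real^'n) \<times> real \<Rightarrow> real^'n"
    and tb :: "(real^'n) \<times> real \<Rightarrow> real"
    and taa :: "(real^'n) \<times> real \<Rightarrow> real^'n^'n"
    and tab tba :: "(real^'n) \<times> real \<Rightarrow> real^'n"
    and tbb :: "(real^'n) \<times> real \<Rightarrow> real"
    and d \<eta> :: real
  assumes d_pos: "d > 0" and eta_pos: "\<eta> > 0"
    and t_deriv: "\<And>p. p \<in> cball 0 d \<times> {-\<eta>..\<eta>} \<Longrightarrow>
       (t has_derivative (\<lambda>(h, k). ta p \<bullet> h + tb p * k)) (at p within cball 0 d \<times> {-\<eta>..\<eta>})"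
    and ta_deriv: "\<And>p. p \<in> cball 0 d \<times> {-\<eta>..\<eta>} \<Longrightarrow>
       (ta has_derivative (\<lambda>(h, k). taa p *v h + k *\<^sub>R tab p)) (at p within cball 0 d \<times> {-\<eta>..\<eta>})"
    and tb_deriv: "\<And>p. p \<in> cball 0 d \<times> {-\<eta>..\<eta>} \<Longrightarrow>
       (tb has_derivative (\<lambda>(h, k). tba p \<bullet> h + tbb p * k)) (at p within cball 0 d \<times> {-\<eta>..\<eta>})"
    and taa_cont: "continuous_on (cball 0 d \<times> {-\<eta>..\<eta>}) taa"
    and tab_cont: "continuous_on (cball 0 d \<times> {-\<eta>..\<eta>}) tab"
    and tba_cont: "continuous_on (cball 0 d \<times> {-\<eta>..\<eta>}) tba"
    and tbb_cont: "continuous_on (cball 0 d \<times> {-\<eta>..\<eta>}) tbb"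
    and tbb_pos: "\<And>p. p \<in> cball 0 d \<times> {-\<eta>..\<eta>} \<Longrightarrow> tbb p > 0"
    and tb_top: "\<And>a. a \<in> cball 0 d \<Longrightarrow> tb (a, \<eta>) > 0"
    and tb_bot: "\<And>a. a \<in> cball 0 d \<Longrightarrow> tb (a, -\<eta>) < 0"
    and schur: "\<And>p. p \<in> cball 0 d \<times> {-\<eta>..\<eta>} \<Longrightarrow>
       lambda_max (taa p - (1 / tbb p) *\<^sub>R outer (tab p)) < 0"
begin

abbreviation S :: "((real^'n) \<times> real) set" where
  "S \<equiv> cball 0 d \<times> {-\<eta>..\<eta>}"

lemma convex_S: "convex S"
  by (intro convex_Times convex_cball convex_real_interval)

lemma compact_S: "compact S"
  by (intro compact_Times compact_cball compact_Icc)

lemma interior_S: "interior S = ball 0 d \<times> {-\<eta><..<\<eta>}"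
  by (simp add: interior_Times)

lemma tb_strict_mono:
  assumes "a \<in> cball 0 d" "-\<eta> \<le> b" "b < b'" "b' \<le> \<eta>"
  shows "tb (a, b) < tb (a, b')"
proof -
  obtain s where s: "s \<in> {0<..<1}" and eq: "tb (a, b') - tb (a, b) = tbb (a, b + s * (b' - b)) * (b' - b)"
    using mvt_convex_snd[OF convex_S _ _ tb_deriv, of a b b'] assms by auto
  have "b + s * (b' - b) \<in> {-\<eta>..\<eta>}"
    using convex_segment_mem[OF convex_real_interval(5), of b "-\<eta>" \<eta> b' s] s assms by auto
  then have "0 < tbb (a, b + s * (b' - b)) * (b' - b)"
    using tbb_pos[of "(a, b + s * (b' - b))"] assms by simp
  then show ?thesis using eq by simp
qed

lemma ex1_tb_zero:
  assumes a: "a \<in> cball 0 d"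
  shows "\<exists>!b. b \<in> {-\<eta>..\<eta>} \<and> tb (a, b) = 0"
proof (rule ex_ex1I)
  have "continuous_on {-\<eta>..\<eta>} (\<lambda>b. tb (a, b))"
    by (rule continuous_on_compose2[OF has_derivative_continuous_on[OF tb_deriv]])
      (use a in \<open>auto intro!: continuous_intros\<close>)
  then show "\<exists>b. b \<in> {-\<eta>..\<eta>} \<and> tb (a, b) = 0"
    using IVT'[of "\<lambda>b. tb (a, b)" "-\<eta>" 0 \<eta>] tb_top[OF a] tb_bot[OF a] eta_pos by force
next
  fix b b' assume "b \<in> {-\<eta>..\<eta>} \<and> tb (a, b) = 0" "b' \<in> {-\<eta>..\<eta>} \<and> tb (a, b') = 0"
  then show "b = b'"
    using tb_strict_mono[OF a, of b b'] tb_strict_mono[OF a, of b' b] by (cases b b' rule: linorder_cases) auto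
qed

definition minimizer :: "real^'n \<Rightarrow> real" where
  "minimizer a = (THE b. b \<in> {-\<eta>..\<eta>} \<and> tb (a, b) = 0)"

lemma minimizer:
  assumes "a \<in> cball 0 d"
  shows "minimizer a \<in> {-\<eta>..\<eta>}" and tb_minimizer: "tb (a, minimizer a) = 0"
  using theI'[OF ex1_tb_zero[OF assms]] unfolding minimizer_def by auto

lemma minimizer_unique:
  assumes "a \<in> cball 0 d" "b \<in> {-\<eta>..\<eta>}" "tb (a, b) = 0"
  shows "b = minimizer a"
  using ex1_tb_zero[OF assms(1)] minimizer[OF assms(1)] assms by blast

lemma minimizer_in_S: "a \<in> cball 0 d \<Longrightarrow> (a, minimizer a) \<in> S"
  using minimizer by auto

lemma minimizer_in_interior:
  assumes "norm a < d"
  shows "(a, minimizer a) \<in> interior S"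
proof -
  have a: "a \<in> cball 0 d" using assms by simp
  have "minimizer a \<noteq> \<eta>" "minimizer a \<noteq> -\<eta>"
    using tb_top[OF a] tb_bot[OF a] tb_minimizer[OF a] by auto
  then show ?thesis using minimizer[OF a] assms unfolding interior_S by auto
qed

lemma tb_sign:
  assumes a: "a \<in> cball 0 d" and "c \<in> {-\<eta>..\<eta>}" "c \<noteq> minimizer a"
  shows "0 < tb (a, c) * (c - minimizer a)"
  using assms tb_strict_mono[OF a, of c "minimizer a"] tb_strict_mono[OF a, of "minimizer a" c]
    minimizer[OF a] tb_minimizer[OF a]
  by (cases c "minimizer a" rule: linorder_cases) (auto intro: mult_pos_pos mult_neg_neg)

lemma t_minimizer_less:
  assumes a: "a \<in> cball 0 d" and b: "b \<in> {-\<eta>..\<eta>}" "b \<noteq> minimizer a"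
  shows "t (a, minimizer a) < t (a, b)"
proof -
  define m where "m = minimizer a"
  obtain s where s: "s \<in> {0<..<1}" and eq: "t (a, b) - t (a, m) = tb (a, m + s * (b - m)) * (b - m)"
    using mvt_convex_snd[OF convex_S _ _ t_deriv, of a m b] minimizer[OF a] a b by (auto simp: m_def)
  define c where "c = m + s * (b - m)"
  have "c \<in> {-\<eta>..\<eta>}"
    using convex_segment_mem[OF convex_real_interval(5) _ b(1), of m s] minimizer[OF a] s
    by (auto simp: c_def m_def)
  moreover have "c \<noteq> m" using s b by (simp add: c_def m_def)
  ultimately have "0 < tb (a, c) * (c - m)" using tb_sign[OF a] by (simp add: m_def)
  also have "tb (a, c) * (c - m) = s * (tb (a, c) * (b - m))" by (simp add: c_def)
  finally have "0 < tb (a, c) * (b - m)" using s by (simp add: zero_less_mult_iff)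
  then show ?thesis using eq by (simp add: c_def m_def)
qed

definition envelope :: "real^'n \<Rightarrow> real" where
  "envelope a = Inf ((\<lambda>b. t (a, b)) ` {-\<eta>..\<eta>})"

lemma envelope_eq:
  assumes "a \<in> cball 0 d"
  shows "envelope a = t (a, minimizer a)"
  unfolding envelope_def
  by (rule cInf_eq_minimum) (use minimizer[OF assms] t_minimizer_less[OF assms] in \<open>force+\<close>)

lemma envelope_le:
  assumes "a \<in> cball 0 d" "b \<in> {-\<eta>..\<eta>}"
  shows "envelope a \<le> t (a, b)"
  using envelope_eq[OF assms(1)] t_minimizer_less[OF assms] by (cases "b = minimizer a") auto

lemma t_eq_envelope_iff:
  assumes "a \<in> cball 0 d" "b \<in> {-\<eta>..\<eta>}"
  shows "t (a, b) = envelope a \<longleftrightarrow> b = minimizer a"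
  using envelope_eq[OF assms(1)] t_minimizer_less[OF assms] by (cases "b = minimizer a") auto

lemma minimizer_increment:
  assumes a: "a \<in> cball 0 d"
  obtains \<xi> where "\<And>a'. a' \<in> cball 0 d \<Longrightarrow> \<xi> a' \<in> S
      \<and> dist (\<xi> a') (a, minimizer a) \<le> dist (a', minimizer a') (a, minimizer a)
      \<and> tbb (\<xi> a') * (minimizer a' - minimizer a) = - (tba (\<xi> a') \<bullet> (a' - a))"
proof -
  define p where "p = (a, minimizer a)"
  have "\<exists>\<xi>. \<xi> \<in> S \<and> dist \<xi> p \<le> dist (a', minimizer a') p
      \<and> tbb \<xi> * (minimizer a' - minimizer a) = - (tba \<xi> \<bullet> (a' - a))"
    if a': "a' \<in> cball 0 d" for a'
  proof -
    define q where "q = (a', minimizer a')"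
    have p: "p \<in> S" and q: "q \<in> S" unfolding p_def q_def using minimizer_in_S a a' by auto
    obtain s where s: "s \<in> {0<..<1}"
      and eq: "tb q - tb p = (\<lambda>(h, k). tba (p + s *\<^sub>R (q - p)) \<bullet> h + tbb (p + s *\<^sub>R (q - p)) * k) (q - p)"
      using mvt_convex[OF convex_S p q tb_deriv] by blast
    show ?thesis
    proof (intro exI conjI)
      show "p + s *\<^sub>R (q - p) \<in> S" using convex_segment_mem[OF convex_S p q] s by simp
      show "dist (p + s *\<^sub>R (q - p)) p \<le> dist (a', minimizer a') p"
        using s unfolding q_def[symmetric] by (simp add: dist_norm mult_left_le_one_le)
      show "tbb (p + s *\<^sub>R (q - p)) * (minimizer a' - minimizer a) = - (tba (p + s *\<^sub>R (q - p)) \<bullet> (a' - a))"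
        using eq tb_minimizer[OF a] tb_minimizer[OF a'] by (simp add: p_def q_def)
    qed
  qed
  then have "\<forall>a'. \<exists>\<xi>. a' \<in> cball 0 d \<longrightarrow> \<xi> \<in> S \<and> dist \<xi> p \<le> dist (a', minimizer a') p
      \<and> tbb \<xi> * (minimizer a' - minimizer a) = - (tba \<xi> \<bullet> (a' - a))"
    by blast
  then obtain \<xi> where "\<forall>a'. a' \<in> cball 0 d \<longrightarrow> \<xi> a' \<in> S \<and> dist (\<xi> a') p \<le> dist (a', minimizer a') p
      \<and> tbb (\<xi> a') * (minimizer a' - minimizer a) = - (tba (\<xi> a') \<bullet> (a' - a))"
    by (rule choice[THEN exE])
  then show ?thesis using that unfolding p_def by blast
qed

lemma minimizer_lipschitz: "\<exists>L. L-lipschitz_on (cball 0 d) minimizer"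
proof -
  obtain K where K: "\<And>p. p \<in> S \<Longrightarrow> norm (tba p) \<le> K"
    using compact_imp_bounded[OF compact_continuous_image[OF tba_cont compact_S]]
    unfolding bounded_iff by blast
  have "S \<noteq> {}" using d_pos eta_pos by (auto intro!: exI[of _ 0])
  then obtain p0 where "p0 \<in> S" and p0: "\<And>p. p \<in> S \<Longrightarrow> tbb p0 \<le> tbb p"
    using continuous_attains_inf[OF compact_S _ tbb_cont] by blast
  define m where "m = tbb p0"
  have m: "0 < m" using tbb_pos[OF \<open>p0 \<in> S\<close>] by (simp add: m_def)
  have "K / m \<ge> 0" using K[OF \<open>p0 \<in> S\<close>] m by (simp add: order_trans[OF norm_ge_zero])
  moreover have "dist (minimizer a') (minimizer a) \<le> K / m * dist a' a"
    if a: "a \<in> cball 0 d" and a': "a' \<in> cball 0 d" for a a'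
  proof -
    obtain \<xi> where "\<xi> \<in> S" and eq: "tbb \<xi> * (minimizer a' - minimizer a) = - (tba \<xi> \<bullet> (a' - a))"
      using minimizer_increment[OF a] a' by metis
    have "m * \<bar>minimizer a' - minimizer a\<bar> \<le> tbb \<xi> * \<bar>minimizer a' - minimizer a\<bar>"
      using p0[OF \<open>\<xi> \<in> S\<close>] by (simp add: m_def mult_right_mono)
    also have "\<dots> = \<bar>tba \<xi> \<bullet> (a' - a)\<bar>"
      using eq tbb_pos[OF \<open>\<xi> \<in> S\<close>] by (metis abs_minus_cancel abs_mult abs_of_pos)
    also have "\<dots> \<le> K * norm (a' - a)"
      using Cauchy_Schwarz_ineq2[of "tba \<xi>" "a' - a"] K[OF \<open>\<xi> \<in> S\<close>]
      by (meson mult_right_mono norm_ge_zero order_trans)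
    finally show ?thesis using m by (simp add: dist_real_def dist_norm field_simps)
  qed
  ultimately show ?thesis unfolding lipschitz_on_def by blast
qed

lemma continuous_on_minimizer: "continuous_on (cball 0 d) minimizer"
  using minimizer_lipschitz lipschitz_on_continuous_on by blast

lemma continuous_on_envelope: "continuous_on (cball 0 d) envelope"
proof -
  have "continuous_on (cball 0 d) (\<lambda>a. t (a, minimizer a))"
    by (rule continuous_on_compose2[OF has_derivative_continuous_on[OF t_deriv]])
      (use minimizer_in_S in \<open>auto intro!: continuous_intros continuous_on_minimizer\<close>)
  then show ?thesis by (rule continuous_on_eq) (simp add: envelope_eq)
qed

lemma
  assumes p: "p \<in> interior S"
  shows t_deriv_interior: "(t has_derivative (\<lambda>(h, k). ta p \<bullet> h + tb p * k)) (at p)"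
    and ta_deriv_interior: "(ta has_derivative (\<lambda>(h, k). taa p *v h + k *\<^sub>R tab p)) (at p)"
    and tb_deriv_interior: "(tb has_derivative (\<lambda>(h, k). tba p \<bullet> h + tbb p * k)) (at p)"
  using t_deriv[OF interior_subset[THEN subsetD, OF p]] ta_deriv[OF interior_subset[THEN subsetD, OF p]]
    tb_deriv[OF interior_subset[THEN subsetD, OF p]]
  by (simp_all add: at_within_interior[OF p])

lemma minimizer_difference_quotient:
  assumes a: "norm a < d"
  obtains \<xi> where "(\<xi> \<longlongrightarrow> (a, minimizer a)) (at 0)" and "eventually (\<lambda>u. \<xi> u \<in> S) (at 0)"
    and "eventually (\<lambda>u. (minimizer (a + u *\<^sub>R h) - minimizer a) / u = - (tba (\<xi> u) \<bullet> h) / tbb (\<xi> u)) (at 0)"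
proof -
  define p where "p = (a, minimizer a)"
  have "a \<in> cball 0 d" using a by simp
  obtain \<zeta> where \<zeta>: "\<And>a'. a' \<in> cball 0 d \<Longrightarrow> \<zeta> a' \<in> S \<and> dist (\<zeta> a') p \<le> dist (a', minimizer a') p
      \<and> tbb (\<zeta> a') * (minimizer a' - minimizer a) = - (tba (\<zeta> a') \<bullet> (a' - a))"
    using minimizer_increment[OF \<open>a \<in> cball 0 d\<close>] unfolding p_def by blast
  define \<xi> where "\<xi> u = \<zeta> (a + u *\<^sub>R h)" for u
  have \<xi>: "\<xi> u \<in> S \<and> dist (\<xi> u) p \<le> dist (a + u *\<^sub>R h, minimizer (a + u *\<^sub>R h)) p
      \<and> tbb (\<xi> u) * (minimizer (a + u *\<^sub>R h) - minimizer a) = - (u * (tba (\<xi> u) \<bullet> h))"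
    if "a + u *\<^sub>R h \<in> cball 0 d" for u
    using \<zeta>[OF that] by (simp add: \<xi>_def)
  have "((\<lambda>u. a + u *\<^sub>R h) \<longlongrightarrow> a + 0 *\<^sub>R h) (at 0)" by (intro tendsto_intros)
  then have line: "((\<lambda>u. a + u *\<^sub>R h) \<longlongrightarrow> a) (at 0)" by simp
  have "eventually (\<lambda>u. a + u *\<^sub>R h \<in> ball 0 d) (at 0)"
    by (rule topological_tendstoD[OF line open_ball]) (use a in simp)
  then have ev: "eventually (\<lambda>u. a + u *\<^sub>R h \<in> cball 0 d) (at 0)"
    by eventually_elim auto
  have "((\<lambda>u. (a + u *\<^sub>R h, minimizer (a + u *\<^sub>R h))) \<longlongrightarrow> p) (at 0)"
    unfolding p_def
    by (intro tendsto_Pair line continuous_on_tendsto_compose[OF continuous_on_minimizer line \<open>a \<in> cball 0 d\<close> ev])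
  then have "(\<xi> \<longlongrightarrow> p) (at 0)"
    by (rule tendsto_dist_le) (use ev in \<open>eventually_elim, use \<xi> in blast\<close>)
  moreover have "eventually (\<lambda>u. \<xi> u \<in> S) (at 0)" using ev by eventually_elim (use \<xi> in blast)
  moreover have "eventually (\<lambda>u. (minimizer (a + u *\<^sub>R h) - minimizer a) / u
      = - (tba (\<xi> u) \<bullet> h) / tbb (\<xi> u)) (at 0)"
    using ev eventually_neq_at_within[of 0 0 UNIV]
  proof eventually_elim
    case (elim u)
    then show ?case using \<xi>[OF elim(1)] tbb_pos[of "\<xi> u"] by (simp add: field_simps)
  qed
  ultimately show ?thesis using that unfolding p_def by blast
qed

lemma minimizer_has_derivative_along_line:
  assumes a: "norm a < d"
  shows "((\<lambda>u. minimizer (a + u *\<^sub>R h)) has_real_derivative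
      - (tba (a, minimizer a) \<bullet> h) / tbb (a, minimizer a)) (at 0)"
proof -
  define p where "p = (a, minimizer a)"
  obtain \<xi> where \<xi>_lim: "(\<xi> \<longlongrightarrow> p) (at 0)" and \<xi>_ev: "eventually (\<lambda>u. \<xi> u \<in> S) (at 0)"
    and quotient: "eventually (\<lambda>u. (minimizer (a + u *\<^sub>R h) - minimizer a) / u
      = - (tba (\<xi> u) \<bullet> h) / tbb (\<xi> u)) (at 0)"
    using minimizer_difference_quotient[OF a] unfolding p_def by blast
  have "p \<in> S" unfolding p_def using minimizer_in_S a by simp
  have "((\<lambda>u. - (tba (\<xi> u) \<bullet> h) / tbb (\<xi> u)) \<longlongrightarrow> - (tba p \<bullet> h) / tbb p) (at 0)"
    using tbb_pos[OF \<open>p \<in> S\<close>]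
    by (intro tendsto_intros continuous_on_tendsto_compose[OF tba_cont \<xi>_lim \<open>p \<in> S\<close> \<xi>_ev]
        continuous_on_tendsto_compose[OF tbb_cont \<xi>_lim \<open>p \<in> S\<close> \<xi>_ev]) auto
  then have "((\<lambda>u. (minimizer (a + u *\<^sub>R h) - minimizer a) / u) \<longlongrightarrow> - (tba p \<bullet> h) / tbb p) (at 0)"
    by (rule Lim_transform_eventually) (use quotient in \<open>simp add: eq_commute\<close>)
  then show ?thesis unfolding p_def has_field_derivative_iff by simp
qed

lemma minimizer_curve_has_derivative:
  assumes "norm a < d"
  shows "((\<lambda>u. (a + u *\<^sub>R h, minimizer (a + u *\<^sub>R h))) has_derivative
      (\<lambda>u. (u *\<^sub>R h, u * (- (tba (a, minimizer a) \<bullet> h) / tbb (a, minimizer a))))) (at 0)"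
proof (rule has_derivative_Pair)
  show "((\<lambda>u. a + u *\<^sub>R h) has_derivative (\<lambda>u. u *\<^sub>R h)) (at 0)"
    by (auto intro!: derivative_eq_intros)
  show "((\<lambda>u. minimizer (a + u *\<^sub>R h)) has_derivative
      (\<lambda>u. u * (- (tba (a, minimizer a) \<bullet> h) / tbb (a, minimizer a)))) (at 0)"
    using minimizer_has_derivative_along_line[OF assms, of h] unfolding has_field_derivative_def
    by (rule has_derivative_eq_rhs) (simp add: fun_eq_iff)
qed

text \<open>The envelope theorem: since \<open>tb\<close> vanishes along the minimizer, the motion of the minimizer
  does not contribute to the derivative of the envelope.\<close>
lemma envelope_has_derivative_along_line:
  assumes a: "norm a < d"
  shows "((\<lambda>u. envelope (a + u *\<^sub>R h)) has_real_derivative ta (a, minimizer a) \<bullet> h) (at 0)"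
proof -
  define c where "c u = (a + u *\<^sub>R h, minimizer (a + u *\<^sub>R h))" for u
  have "(t has_derivative (\<lambda>(h', k). ta (a, minimizer a) \<bullet> h' + tb (a, minimizer a) * k)) (at (c 0))"
    using t_deriv_interior[OF minimizer_in_interior[OF a]] by (simp add: c_def)
  from diff_chain_at[OF minimizer_curve_has_derivative[OF a, of h, folded c_def] this]
  have "((\<lambda>u. t (a + u *\<^sub>R h, minimizer (a + u *\<^sub>R h))) has_derivative (\<lambda>u. u * (ta (a, minimizer a) \<bullet> h))) (at 0)"
    using a by (simp add: o_def c_def tb_minimizer algebra_simps)
  then have "((\<lambda>u. t (a + u *\<^sub>R h, minimizer (a + u *\<^sub>R h))) has_real_derivative ta (a, minimizer a) \<bullet> h) (at 0)"
    unfolding has_field_derivative_def by (rule has_derivative_eq_rhs) (simp add: fun_eq_iff)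
  then show ?thesis
  proof (rule has_field_derivative_transform_within_open)
    show "open {u. norm (a + u *\<^sub>R h) < d}" by (intro open_Collect_less continuous_intros)
    show "0 \<in> {u. norm (a + u *\<^sub>R h) < d}" using a by simp
  qed (simp add: envelope_eq)
qed

definition envelope_second_derivative :: "real^'n \<Rightarrow> real^'n \<Rightarrow> real" where
  "envelope_second_derivative a h =
     (taa (a, minimizer a) *v h) \<bullet> h
     - (tab (a, minimizer a) \<bullet> h) * (tba (a, minimizer a) \<bullet> h) / tbb (a, minimizer a)"

lemma gradient_has_derivative_along_line:
  assumes a: "norm a < d"
  shows "((\<lambda>u. ta (a + u *\<^sub>R h, minimizer (a + u *\<^sub>R h)) \<bullet> h) has_real_derivative
      envelope_second_derivative a h) (at 0)"
proof -
  define c where "c u = (a + u *\<^sub>R h, minimizer (a + u *\<^sub>R h))" for u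
  have "(ta has_derivative (\<lambda>(h', k). taa (a, minimizer a) *v h' + k *\<^sub>R tab (a, minimizer a))) (at (c 0))"
    using ta_deriv_interior[OF minimizer_in_interior[OF a]] by (simp add: c_def)
  from has_derivative_inner_left[OF diff_chain_at[OF minimizer_curve_has_derivative[OF a, of h, folded c_def] this], of h]
  have "((\<lambda>u. ta (a + u *\<^sub>R h, minimizer (a + u *\<^sub>R h)) \<bullet> h) has_derivative
      (\<lambda>u. u * envelope_second_derivative a h)) (at 0)"
    by (simp add: o_def c_def envelope_second_derivative_def matrix_vector_mult_scaleR inner_add_left algebra_simps)
  then show ?thesis
    unfolding has_field_derivative_def by (rule has_derivative_eq_rhs) (simp add: fun_eq_iff)
qed

definition hessian :: "(real^'n) \<times> real \<Rightarrow> (real^'n) \<times> real \<Rightarrow> (real^'n) \<times> real \<Rightarrow> real" where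
  "hessian p v w = (taa p *v fst w + snd w *\<^sub>R tab p) \<bullet> fst v + (tba p \<bullet> fst w + tbb p * snd w) * snd v"

lemma hessian_symmetric:
  assumes p: "p \<in> interior S"
  shows "hessian p v w = hessian p w v"
proof (rule second_derivative_symmetric[OF open_interior p])
  show "(t has_derivative (\<lambda>v. ta y \<bullet> fst v + tb y * snd v)) (at y)" if "y \<in> interior S" for y
    using t_deriv_interior[OF that] by (simp add: case_prod_unfold)
  show "((\<lambda>z. ta z \<bullet> fst v + tb z * snd v) has_derivative hessian y v) (at y)"
    if "y \<in> interior S" for y v
    by (rule has_derivative_eq_rhs[OF has_derivative_add[OF
          has_derivative_inner_left[OF ta_deriv_interior[OF that]]
          has_derivative_mult_left[OF tb_deriv_interior[OF that]]]])
      (auto simp: hessian_def fun_eq_iff)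
  have cont: "continuous_on (interior S) taa" "continuous_on (interior S) tab"
    "continuous_on (interior S) tba" "continuous_on (interior S) tbb"
    using continuous_on_subset[OF _ interior_subset] taa_cont tab_cont tba_cont tbb_cont by blast+
  have "(\<lambda>y. (taa y *v c) \<bullet> e) = (\<lambda>y. \<Sum>i\<in>UNIV. (\<Sum>j\<in>UNIV. taa y $ i $ j * c $ j) * e $ i)" for c e
    by (simp add: fun_eq_iff matrix_vector_mult_def inner_vec_def)
  then have taa_form: "continuous_on (interior S) (\<lambda>y. (taa y *v c) \<bullet> e)" for c e
    by (simp only:) (intro continuous_intros cont)
  have "continuous_on (interior S) (\<lambda>y. hessian y v w)" for v w
    unfolding hessian_def inner_add_left inner_scaleR_left
    by (intro taa_form continuous_intros cont)
  then show "isCont (\<lambda>y. hessian y v w) p" for v w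
    using continuous_on_eq_continuous_at[OF open_interior] p by blast
qed

lemma taa_symmetric: "p \<in> interior S \<Longrightarrow> x \<bullet> (taa p *v y) = y \<bullet> (taa p *v x)"
  using hessian_symmetric[of p "(x, 0)" "(y, 0)"] by (simp add: hessian_def inner_commute)

lemma tab_eq_tba: "p \<in> interior S \<Longrightarrow> tab p \<bullet> h = tba p \<bullet> h"
  using hessian_symmetric[of p "(h, 0)" "(0, 1)"] by (simp add: hessian_def)

text \<open>The second derivative of the envelope is the quadratic form of the Schur complement
  of \<open>tbb\<close> in the Hessian of \<open>t\<close>.\<close>
lemma envelope_second_derivative_neg:
  assumes a: "norm a < d" and h: "h \<noteq> 0"
  shows "envelope_second_derivative a h < 0"
proof -
  define p where "p = (a, minimizer a)"
  have p: "p \<in> interior S" unfolding p_def using minimizer_in_interior[OF a] .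
  define M where "M = taa p - (1 / tbb p) *\<^sub>R outer (tab p)"
  have Mv: "M *v y = taa p *v y - ((tab p \<bullet> y) / tbb p) *\<^sub>R tab p" for y
    unfolding M_def
    by (simp add: matrix_vector_mult_diff_rdistrib scaleR_matrix_vector_assoc[symmetric] outer_mult_vector)
  have "x \<bullet> (M *v y) = y \<bullet> (M *v x)" for x y
    unfolding Mv using taa_symmetric[OF p, of x y]
    by (simp add: inner_diff_right inner_commute)
  then have "h \<bullet> (M *v h) \<le> lambda_max M * (h \<bullet> h)" by (rule quadratic_form_le_lambda_max)
  moreover have "lambda_max M * (h \<bullet> h) < 0"
    using schur[OF interior_subset[THEN subsetD, OF p]] h by (simp add: M_def mult_neg_pos)
  moreover have "h \<bullet> (M *v h) = envelope_second_derivative a h"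
    unfolding Mv envelope_second_derivative_def p_def[symmetric] tab_eq_tba[OF p, symmetric]
    by (simp add: inner_diff_right inner_commute)
  ultimately show ?thesis by linarith
qed


lemma envelope_decreases_from_critical:
  assumes a1: "norm a1 < d" and a2: "norm a2 < d" and "a1 \<noteq> a2"
    and crit: "ta (a1, minimizer a1) = 0"
  shows "envelope a2 < envelope a1"
proof -
  define h where "h = a2 - a1"
  define g where "g u = envelope (a1 + u *\<^sub>R h)" for u
  define k where "k u = ta (a1 + u *\<^sub>R h, minimizer (a1 + u *\<^sub>R h)) \<bullet> h" for u
  have inner: "norm (a1 + s *\<^sub>R h) < d" if "s \<in> {0..1}" for s
    using convex_segment_mem[OF convex_ball, of a1 0 d a2 s] a1 a2 that by (simp add: h_def)
  have shift: "a1 + (u + s) *\<^sub>R h = (a1 + s *\<^sub>R h) + u *\<^sub>R h" for u s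
    by (simp add: algebra_simps)
  have g': "DERIV g s :> k s" if "0 \<le> s" "s \<le> 1" for s
    using envelope_has_derivative_along_line[OF inner, of s h] DERIV_shift[of g "k s" 0 s] that
    by (simp add: g_def k_def shift)
  have k': "DERIV k s :> envelope_second_derivative (a1 + s *\<^sub>R h) h" if "0 \<le> s" "s \<le> 1" for s
    using gradient_has_derivative_along_line[OF inner, of s h] DERIV_shift[of k _ 0 s] that
    by (simp add: k_def shift)
  have k_neg: "k s < 0" if "0 < s" "s \<le> 1" for s
  proof -
    have "k s < k 0"
    proof (rule DERIV_neg_imp_decreasing[OF that(1)])
      fix x assume "0 \<le> x" "x \<le> s"
      then show "\<exists>y. DERIV k x :> y \<and> y < 0"
        using k' envelope_second_derivative_neg[OF inner] \<open>a1 \<noteq> a2\<close> that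
        by (metis atLeastAtMost_iff h_def order.trans eq_iff_diff_eq_0)
    qed
    then show ?thesis using crit by (simp add: k_def)
  qed
  obtain z where "0 < z" "z < 1" and "g 1 - g 0 = (1 - 0) * k z"
    using MVT2[of 0 1 g k] g' by auto
  then show ?thesis using k_neg[of z] by (simp add: g_def h_def)
qed

lemma argmax_interior_critical:
  assumes a: "norm a < d" and max: "\<And>a'. a' \<in> cball 0 d \<Longrightarrow> envelope a' \<le> envelope a"
  shows "ta (a, minimizer a) = 0"
proof -
  define h where "h = ta (a, minimizer a)"
  define \<delta> where "\<delta> = (d - norm a) / (norm h + 1)"
  have "\<delta> > 0" unfolding \<delta>_def using a by (simp add: add_nonneg_pos)
  have "ta (a, minimizer a) \<bullet> h = 0"
  proof (rule DERIV_local_max[OF envelope_has_derivative_along_line[OF a] \<open>\<delta> > 0\<close>], intro allI impI)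
    fix y :: real assume y: "\<bar>0 - y\<bar> < \<delta>"
    have "norm (a + y *\<^sub>R h) \<le> norm a + \<bar>y\<bar> * norm h"
      using norm_triangle_ineq[of a "y *\<^sub>R h"] by simp
    also have "\<bar>y\<bar> * norm h \<le> \<delta> * (norm h + 1)"
      using y by (intro mult_mono) auto
    also have "\<delta> * (norm h + 1) = d - norm a"
      unfolding \<delta>_def using norm_ge_zero[of h] by (simp add: add_nonneg_eq_0_iff)
    finally show "envelope (a + y *\<^sub>R h) \<le> envelope (a + 0 *\<^sub>R h)" using max by simp
  qed
  then show ?thesis by (simp add: h_def)
qed

lemma t_radial_has_derivative:
  assumes a: "a \<in> cball 0 d" and b: "b \<in> {-\<eta>..\<eta>}"
  shows "((\<lambda>u. t (a + u *\<^sub>R a, b)) has_real_derivative ta (a, b) \<bullet> a) (at 0 within {-1..0})"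
proof -
  have pair: "((\<lambda>u. (a + u *\<^sub>R a, b)) has_derivative (\<lambda>u. (0 + u *\<^sub>R a, 0))) (at 0 within {-1..0})"
    by (intro has_derivative_Pair has_derivative_add has_derivative_const
        has_derivative_scaleR_left has_derivative_ident)
  have "(\<lambda>u. (a + u *\<^sub>R a, b)) ` {-1..0} \<subseteq> S" using radial_segment_in_cball[OF a] b by auto
  from has_derivative_in_compose2[OF t_deriv this _ pair]
  show ?thesis unfolding has_field_derivative_def
    by (rule has_derivative_eq_rhs) (auto simp: fun_eq_iff)
qed

lemma boundary_argmax_slope_nonneg:
  assumes "norm a = d" and D: "((\<lambda>s. envelope (a + s *\<^sub>R a)) has_real_derivative D) (at 0 within {-1..0})"
    and max: "\<And>a'. a' \<in> cball 0 d \<Longrightarrow> envelope a' \<le> envelope a"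
  shows "D \<ge> 0"
proof (rule has_real_derivative_at_left_le[OF D DERIV_const])
  fix u :: real assume "u \<in> {-1..0}"
  then show "envelope (a + u *\<^sub>R a) - envelope (a + 0 *\<^sub>R a) \<le> 0 - 0"
    using max[OF radial_segment_in_cball] assms(1) by simp
qed

lemma boundary_critical_slope_nonneg:
  assumes a: "norm a = d" and D: "((\<lambda>s. envelope (a + s *\<^sub>R a)) has_real_derivative D) (at 0 within {-1..0})"
    and crit: "ta (a, minimizer a) = 0"
  shows "D \<ge> 0"
proof -
  have "a \<in> cball 0 d" using a by simp
  show ?thesis
  proof (rule has_real_derivative_at_left_le[OF D])
    show "((\<lambda>u. t (a + u *\<^sub>R a, minimizer a)) has_real_derivative 0) (at 0 within {-1..0})"
      using t_radial_has_derivative[OF \<open>a \<in> cball 0 d\<close> minimizer(1)[OF \<open>a \<in> cball 0 d\<close>]] crit by simp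
    fix u :: real assume "u \<in> {-1..0}"
    then show "envelope (a + u *\<^sub>R a) - envelope (a + 0 *\<^sub>R a)
        \<le> t (a + u *\<^sub>R a, minimizer a) - t (a + 0 *\<^sub>R a, minimizer a)"
      using envelope_le[OF radial_segment_in_cball minimizer(1)] envelope_eq \<open>a \<in> cball 0 d\<close> by simp
  qed
qed

context
  assumes boundary: "\<And>a. norm a = d \<Longrightarrow>
    \<exists>D < 0. ((\<lambda>s. envelope (a + s *\<^sub>R a)) has_real_derivative D) (at 0 within {-1..0})"
begin

lemma argmax_critical:
  assumes "a \<in> cball 0 d" and max: "\<And>a'. a' \<in> cball 0 d \<Longrightarrow> envelope a' \<le> envelope a"
  shows "ta (a, minimizer a) = 0"
proof -
  have "norm a \<noteq> d" using boundary boundary_argmax_slope_nonneg[OF _ _ max] by force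
  then show ?thesis using assms argmax_interior_critical by simp
qed

lemma critical_unique:
  assumes "a \<in> cball 0 d" "a' \<in> cball 0 d"
    and "ta (a, minimizer a) = 0" "ta (a', minimizer a') = 0"
  shows "a = a'"
proof -
  have "norm a \<noteq> d" "norm a' \<noteq> d"
    using boundary boundary_critical_slope_nonneg assms(3,4) by force+
  then show ?thesis
    using envelope_decreases_from_critical[of a a'] envelope_decreases_from_critical[of a' a] assms
    by fastforce
qed

end

end

theorem lemma6p10:
  fixes t :: "(real^('n::finite)) \<times> real \<Rightarrow> real"
    and ta :: "(real^'n) \<times> real \<Rightarrow> real^'n"
    and tb :: "(real^'n) \<times> real \<Rightarrow> real"
    and taa :: "(real^'n) \<times> real \<Rightarrow> real^'n^'n"
    and tab :: "(real^'n) \<times> real \<Rightarrow> real^'n"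
    and tba :: "(real^'n) \<times> real \<Rightarrow> real^'n"
    and tbb :: "(real^'n) \<times> real \<Rightarrow> real"
    and d \<eta> :: real
  defines "A \<equiv> {a :: real^'n. norm a \<le> d}"
    and "S \<equiv> {a :: real^'n. norm a \<le> d} \<times> {-\<eta>..\<eta>}"
    and "\<phi> \<equiv> (\<lambda>a. Inf ((\<lambda>b. t (a, b)) ` {-\<eta>..\<eta>}))"
  assumes d_pos: "d > 0" and eta_pos: "\<eta> > 0"
    and t_deriv: "\<And>p. p \<in> S \<Longrightarrow>
       (t has_derivative (\<lambda>(h, k). ta p \<bullet> h + tb p * k)) (at p within S)"
    and ta_deriv: "\<And>p. p \<in> S \<Longrightarrow>
       (ta has_derivative (\<lambda>(h, k). taa p *v h + k *\<^sub>R tab p)) (at p within S)"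
    and tb_deriv: "\<And>p. p \<in> S \<Longrightarrow>
       (tb has_derivative (\<lambda>(h, k). tba p \<bullet> h + tbb p * k)) (at p within S)"
    and cont: "continuous_on S taa" "continuous_on S tab" "continuous_on S tba"
      "continuous_on S tbb"
    and tbb_pos: "\<And>a b. a \<in> A \<Longrightarrow> b \<in> {-\<eta>..\<eta>} \<Longrightarrow> tbb (a, b) > 0"
    and tb_top: "\<And>a. a \<in> A \<Longrightarrow> tb (a, \<eta>) > 0"
    and tb_bot: "\<And>a. a \<in> A \<Longrightarrow> tb (a, -\<eta>) < 0"
    and schur: "\<And>a b. a \<in> A \<Longrightarrow> b \<in> {-\<eta>..\<eta>} \<Longrightarrow>
       lambda_max (taa (a, b) - (1 / tbb (a, b)) *\<^sub>R outer (tab (a, b))) < 0"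
    and boundary: "\<And>a. norm a = d \<Longrightarrow>
       \<exists>D < 0. ((\<lambda>s. \<phi> (a + s *\<^sub>R a)) has_real_derivative D) (at 0 within {-1..0})"
  shows "\<exists>a0 b0. (a0, b0) \<in> S \<and> ta (a0, b0) = 0 \<and> tb (a0, b0) = 0
      \<and> (\<forall>p\<in>S. ta p = 0 \<and> tb p = 0 \<longrightarrow> p = (a0, b0))
      \<and> (\<forall>a\<in>A. \<forall>b\<in>{-\<eta>..\<eta>}.
           (\<phi> a = (SUP a'\<in>A. \<phi> a') \<and> t (a, b) = \<phi> a) \<longleftrightarrow> (a = a0 \<and> b = b0))"
proof -
  have A: "A = cball 0 d" and S: "S = cball 0 d \<times> {-\<eta>..\<eta>}" by (auto simp: A_def S_def)
  interpret minimax_problem t ta tb taa tab tba tbb d \<eta>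
    by unfold_locales
      (use d_pos eta_pos t_deriv ta_deriv tb_deriv cont tbb_pos tb_top tb_bot schur in \<open>auto simp: A S\<close>)
  have \<phi>: "\<phi> = envelope" by (simp add: \<phi>_def envelope_def fun_eq_iff)
  note boundary = boundary[unfolded \<phi>]
  obtain a0 where a0: "a0 \<in> cball 0 d" and max: "\<And>a. a \<in> cball 0 d \<Longrightarrow> envelope a \<le> envelope a0"
    using continuous_attains_sup[OF compact_cball _ continuous_on_envelope] d_pos by force
  have crit0: "ta (a0, minimizer a0) = 0" by (rule argmax_critical[OF boundary a0 max])
  have argmax_iff: "envelope a = envelope a0 \<longleftrightarrow> a = a0" if "a \<in> cball 0 d" for a
    using argmax_critical[OF boundary that] critical_unique[OF boundary that a0 _ crit0] max by force
  have sup: "(SUP a\<in>A. \<phi> a) = envelope a0"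
    unfolding A \<phi> by (rule cSup_eq_maximum) (use a0 max in auto)
  show ?thesis
  proof (intro exI[of _ a0] exI[of _ "minimizer a0"] conjI ballI impI)
    show "(a0, minimizer a0) \<in> S" unfolding S using minimizer_in_S[OF a0] .
    show "ta (a0, minimizer a0) = 0" "tb (a0, minimizer a0) = 0" using crit0 tb_minimizer[OF a0] .
  next
    fix p assume "p \<in> S" and "ta p = 0 \<and> tb p = 0"
    then obtain a b where p: "p = (a, b)" "a \<in> cball 0 d" "b = minimizer a" "ta (a, minimizer a) = 0"
      unfolding S using minimizer_unique by (metis SigmaE)
    then show "p = (a0, minimizer a0)" using critical_unique[OF boundary _ a0 _ crit0] by simp
  next
    fix a b assume "a \<in> A" "b \<in> {-\<eta>..\<eta>}"
    then show "(\<phi> a = (SUP a'\<in>A. \<phi> a') \<and> t (a, b) = \<phi> a) \<longleftrightarrow> (a = a0 \<and> b = minimizer a0)"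
      unfolding sup unfolding A \<phi> using argmax_iff t_eq_envelope_iff by blast
  qed
qed

end
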